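(* Let $(\Omega,\mathcal F,Q,(\mathcal F_t)_{t=0}^T)$ be a filtered probability space, $\pi>0$, and $t\in\{0,\dots,T-1\}$. Suppose $c_t:\mathbb R\times\Omega\to\mathbb R$ is $\mathcal B(\mathbb R)\otimes\mathcal F_t$-measurable with $a\mapsto c_t(a)(\omega)$ non-decreasing and continuous, and $\alpha_{t+1}:\mathbb R\times\Omega\to[0,\pi]$ is $\mathcal B(\mathbb R)\otimes\mathcal F$-measurable with $g\mapsto\alpha_{t+1}(g)(\omega)$ non-decreasing for all $\omega\in\Omega$. Let $Q_t$ be a regular version of the $\mathcal F_t$-conditional distribution of $Q$, and let $\varepsilon_{t+1}$ be a random variable such that for each $\omega\in\Omega$ the map $\mathbb R\to[0,\pi]$, $x\mapsto\int_\Omega\alpha_{t+1}(x+\varepsilon_{t+1}(\omega'))(\omega')\,Q_t(d\omega')(\omega)$ is continuous. Then: (i) there exists a unique $\mathcal B(\mathbb R)\otimes\mathcal F_t$-measurable $[0,\pi]$-valued $\alpha_t$ satisfying $$\alpha_t(g)(\omega)=\mathbb E^Q_t\big(\alpha_{t+1}(g-c_t(\alpha_t(g))+\varepsilon_{t+1})\big)(\omega)\quad\text{for all }g\in\mathbb R\text{ and almost all }\omega\in\Omega;$$ (ii) the map $\mathbb R\to[0,\pi]$, $g\mapsto\alpha_t(g)(\omega)$, is non-decreasing and continuous for all $\omega\in\Omega$.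
   Context: $\mathbb E^Q_t$ denotes conditional expectation under $Q$ given $\mathcal F_t$. *)

theory Defs
  imports "HOL-Probability.Probability"
begin

definition regular_cond_distr :: "'a measure \<Rightarrow> 'a measure \<Rightarrow> ('a \<Rightarrow> 'a measure) \<Rightarrow> bool" where
  "regular_cond_distr M G K \<longleftrightarrow>
     K \<in> measurable G (prob_algebra M) \<and>
     (\<forall>A\<in>sets M. AE \<omega> in M. measure (K \<omega>) A = real_cond_exp M G (indicator A) \<omega>)"

definition filtration_upto :: "'a measure \<Rightarrow> (nat \<Rightarrow> 'a measure) \<Rightarrow> nat \<Rightarrow> bool" where
  "filtration_upto M F T \<longleftrightarrow>
     (\<forall>s\<le>T. subalgebra M (F s)) \<and> (\<forall>s s'. s \<le> s' \<longrightarrow> s' \<le> T \<longrightarrow> sets (F s) \<subseteq> sets (F s'))"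

end

theory Submission
  imports Defs
begin

text \<open>Write \<open>\<phi>(x, \<omega>) = \<integral> \<alpha>\<^sub>t\<^sub>+\<^sub>1(x + \<epsilon>(\<omega>'))(\<omega>') K\<^sub>\<omega>(d\<omega>')\<close>. Because \<open>K\<close> is a regular
  conditional distribution, conditioning on \<open>F\<^sub>t\<close> freezes \<open>F\<^sub>t\<close>-measurable arguments, so the
  defining equation for \<open>\<alpha>\<^sub>t\<close> is equivalent, for almost every \<open>\<omega>\<close>, to the pointwise equation
  \<open>a = \<phi>(g - c\<^sub>t(a)(\<omega>), \<omega>)\<close>. Since \<open>\<phi>\<close> is non-decreasing, continuous and \<open>[0, \<pi>]\<close>-valued and
  \<open>c\<^sub>t\<close> is non-decreasing and continuous, \<open>a - \<phi>(g - c\<^sub>t(a), \<omega>)\<close> is strictly increasing and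
  continuous, non-positive at \<open>0\<close> and non-negative at \<open>\<pi>\<close>: it has exactly one zero \<open>\<alpha>\<^sub>t(g)(\<omega>)\<close>.
  The identity \<open>{\<alpha>\<^sub>t(g) \<le> q} = {\<phi>(g - c\<^sub>t(q)) \<le> q}\<close> yields joint measurability as well as
  monotonicity and continuity in \<open>g\<close>.\<close>

text \<open>Only meaningful under the assumptions of \<open>monotone_feedback\<close> below, which make the
  fixed point unique; otherwise \<open>THE\<close> yields an unspecified value.\<close>

definition fixed_point_root :: "(real \<Rightarrow> real) \<Rightarrow> (real \<Rightarrow> real) \<Rightarrow> real \<Rightarrow> real" where
  "fixed_point_root \<phi> c g = (THE a. a = \<phi> (g - c a))"

locale monotone_feedback =
  fixes \<phi> c :: "real \<Rightarrow> real" and \<pi> :: real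
  assumes mono_\<phi>: "mono \<phi>" and continuous_\<phi>: "continuous_on UNIV \<phi>"
    and range_\<phi>: "\<And>x. 0 \<le> \<phi> x \<and> \<phi> x \<le> \<pi>"
    and mono_c: "mono c" and continuous_c: "continuous_on UNIV c"
begin

abbreviation root :: "real \<Rightarrow> real" where
  "root \<equiv> fixed_point_root \<phi> c"

lemma residual_strict_mono:
  assumes "a < b"
  shows "a - \<phi> (g - c a) < b - \<phi> (g - c b)"
proof -
  have "c a \<le> c b"
    using mono_c assms by (simp add: mono_def)
  then have "\<phi> (g - c b) \<le> \<phi> (g - c a)"
    using mono_\<phi> by (simp add: mono_def)
  with assms show ?thesis
    by simp
qed

lemma fixed_point_exists: "\<exists>a. a = \<phi> (g - c a)"
proof -
  have "continuous_on UNIV (\<lambda>a. g - c a)"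
    by (intro continuous_intros continuous_c)
  from continuous_on_compose2[OF continuous_\<phi> this subset_UNIV]
  have "continuous_on UNIV (\<lambda>a. a - \<phi> (g - c a))"
    by (intro continuous_intros)
  then have "continuous_on {0..\<pi>} (\<lambda>a. a - \<phi> (g - c a))"
    by (rule continuous_on_subset) simp
  moreover have "0 - \<phi> (g - c 0) \<le> 0" "0 \<le> \<pi> - \<phi> (g - c \<pi>)" "0 \<le> \<pi>"
    using range_\<phi>[of "g - c 0"] range_\<phi>[of "g - c \<pi>"] by auto
  ultimately obtain a where "a - \<phi> (g - c a) = 0"
    using IVT'[of "\<lambda>a. a - \<phi> (g - c a)"] by blast
  then show ?thesis
    by auto
qed

lemma fixed_point_unique:
  assumes "a = \<phi> (g - c a)" and "b = \<phi> (g - c b)"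
  shows "a = b"
  using residual_strict_mono[of a b g] residual_strict_mono[of b a g] assms
  by (cases a b rule: linorder_cases) linarith+

lemma root_fixed_point: "\<phi> (g - c (root g)) = root g"
proof -
  have "\<exists>!a. a = \<phi> (g - c a)"
    using fixed_point_exists fixed_point_unique by blast
  from theI'[OF this] show ?thesis
    unfolding fixed_point_root_def by (rule sym)
qed

lemma root_unique: "a = \<phi> (g - c a) \<Longrightarrow> a = root g"
  using fixed_point_unique root_fixed_point by metis

lemma root_range: "0 \<le> root g \<and> root g \<le> \<pi>"
  using range_\<phi>[of "g - c (root g)"] by (simp only: root_fixed_point)

lemma root_le_iff: "root g \<le> q \<longleftrightarrow> \<phi> (g - c q) \<le> q"
  using residual_strict_mono[of q "root g" g] residual_strict_mono[of "root g" q g] root_fixed_point[of g]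
  by (cases "root g" q rule: linorder_cases) auto

lemma root_less_iff: "root g < q \<longleftrightarrow> \<phi> (g - c q) < q"
  using residual_strict_mono[of q "root g" g] residual_strict_mono[of "root g" q g] root_fixed_point[of g]
  by (cases "root g" q rule: linorder_cases) auto

lemma mono_root: "mono root"
proof (rule monoI)
  fix g h :: real
  assume "g \<le> h"
  then have "\<phi> (g - c (root h)) \<le> \<phi> (h - c (root h))"
    using mono_\<phi> by (simp add: mono_def)
  then show "root g \<le> root h"
    using root_fixed_point[of h] root_le_iff by simp
qed

lemma continuous_root: "continuous_on UNIV root"
proof (rule continuous_at_imp_continuous_on, intro ballI)
  fix g0 :: real
  have tendsto: "((\<lambda>g. \<phi> (g - c q)) \<longlongrightarrow> \<phi> (g0 - c q)) (at g0)" for q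
  proof -
    have "continuous_on UNIV (\<lambda>g. g - c q)"
      by (intro continuous_intros)
    from continuous_on_compose2[OF continuous_\<phi> this subset_UNIV]
    show ?thesis
      by (simp add: continuous_on_eq_continuous_at isCont_def)
  qed
  show "isCont root g0"
    unfolding isCont_def
  proof (rule order_tendstoI)
    fix q assume "q < root g0"
    then have "q < \<phi> (g0 - c q)"
      using root_le_iff[of g0 q] by linarith
    from order_tendstoD(1)[OF tendsto this]
    show "\<forall>\<^sub>F g in at g0. q < root g"
      by (rule eventually_mono) (use root_le_iff in \<open>meson not_le\<close>)
  next
    fix q assume "root g0 < q"
    then have "\<phi> (g0 - c q) < q"
      using root_less_iff[of g0 q] by linarith
    from order_tendstoD(2)[OF tendsto this]
    show "\<forall>\<^sub>F g in at g0. root g < q"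
      by (rule eventually_mono) (use root_less_iff in blast)
  qed
qed

end

lemma measurable_fixed_point_root:
  assumes \<phi>[measurable]: "(\<lambda>(x, \<omega>). \<phi> x \<omega>) \<in> borel_measurable (borel \<Otimes>\<^sub>M N)"
    and c[measurable]: "(\<lambda>(a, \<omega>). c a \<omega>) \<in> borel_measurable (borel \<Otimes>\<^sub>M N)"
    and feedback: "\<And>\<omega>. \<omega> \<in> space N \<Longrightarrow> monotone_feedback (\<lambda>x. \<phi> x \<omega>) (\<lambda>a. c a \<omega>) \<pi>"
  shows "(\<lambda>(g, \<omega>). fixed_point_root (\<lambda>x. \<phi> x \<omega>) (\<lambda>a. c a \<omega>) g) \<in> borel_measurable (borel \<Otimes>\<^sub>M N)"
  unfolding borel_measurable_iff_le
proof
  fix q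
  have [measurable]: "(\<lambda>\<omega>. c q \<omega>) \<in> borel_measurable N"
    using measurable_Pair2[OF c, of q] by simp
  have "(\<lambda>(g, \<omega>). \<phi> (g - c q \<omega>) \<omega>) \<in> borel_measurable (borel \<Otimes>\<^sub>M N)"
    by measurable
  then have "{w \<in> space (borel \<Otimes>\<^sub>M N). (\<lambda>(g, \<omega>). \<phi> (g - c q \<omega>) \<omega>) w \<le> q} \<in> sets (borel \<Otimes>\<^sub>M N)"
    by (simp add: borel_measurable_iff_le)
  also have "{w \<in> space (borel \<Otimes>\<^sub>M N). (\<lambda>(g, \<omega>). \<phi> (g - c q \<omega>) \<omega>) w \<le> q}
      = {w \<in> space (borel \<Otimes>\<^sub>M N). (\<lambda>(g, \<omega>). fixed_point_root (\<lambda>x. \<phi> x \<omega>) (\<lambda>a. c a \<omega>) g) w \<le> q}"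
    by (auto simp: space_pair_measure monotone_feedback.root_le_iff[OF feedback])
  finally show "{w \<in> space (borel \<Otimes>\<^sub>M N).
      (\<lambda>(g, \<omega>). fixed_point_root (\<lambda>x. \<phi> x \<omega>) (\<lambda>a. c a \<omega>) g) w \<le> q} \<in> sets (borel \<Otimes>\<^sub>M N)" .
qed

lemma integral_measurable_subprob_algebra2:
  fixes f :: "'a \<Rightarrow> 'b \<Rightarrow> real"
  assumes f[measurable]: "(\<lambda>(x, y). f x y) \<in> borel_measurable (M \<Otimes>\<^sub>M N)"
    and L[measurable]: "L \<in> measurable M (subprob_algebra N)"
  shows "(\<lambda>x. integral\<^sup>L (L x) (f x)) \<in> borel_measurable M"
proof -
  note integral_measurable_subprob_algebra[measurable]
  note measurable_distr2[measurable]
  have "(\<lambda>x. integral\<^sup>L (distr (L x) (M \<Otimes>\<^sub>M N) (\<lambda>y. (x, y))) (\<lambda>(x, y). f x y)) \<in> borel_measurable M"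
    by measurable
  then show ?thesis
    by (rule measurable_cong[THEN iffD1, rotated]) (simp add: integral_distr)
qed

lemma (in prob_space)
  fixes f :: "'a \<Rightarrow> real"
  assumes "f \<in> borel_measurable M" and "\<And>x. x \<in> space M \<Longrightarrow> a \<le> f x \<and> f x \<le> b"
  shows integrable_between_bounds: "integrable M f"
    and integral_between_bounds: "a \<le> expectation f \<and> expectation f \<le> b"
proof -
  show "integrable M f"
    using assms by (intro integrable_const_bound[where B="max \<bar>a\<bar> \<bar>b\<bar>"] AE_I2) force+
  then show "a \<le> expectation f \<and> expectation f \<le> b"
    using assms(2) by (auto intro!: integral_ge_const integral_le_const AE_I2)
qed

locale regular_cond_kernel = prob_space M + finite_measure_subalgebra M G
  for M :: "'a measure" and G :: "'a measure" +
  fixes K :: "'a \<Rightarrow> 'a measure"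
  assumes regular: "regular_cond_distr M G K"
begin

lemma space_G: "space G = space M"
  using subalg by (simp add: subalgebra_def)

lemma kernel_measurable[measurable]: "K \<in> measurable G (subprob_algebra M)"
  using regular by (auto simp: regular_cond_distr_def intro: measurable_prob_algebraD)

lemma kernel_cond_prob: "A \<in> sets M \<Longrightarrow> AE \<omega> in M. measure (K \<omega>) A = real_cond_exp M G (indicator A) \<omega>"
  using regular by (simp add: regular_cond_distr_def)

lemma
  assumes "\<omega> \<in> space M"
  shows prob_space_K: "prob_space (K \<omega>)"
    and sets_K: "sets (K \<omega>) = sets M"
    and space_K: "space (K \<omega>) = space M"
proof -
  have "K \<omega> \<in> space (prob_algebra M)"
    using regular assms space_G by (auto simp: regular_cond_distr_def dest: measurable_space)
  then show "prob_space (K \<omega>)" and sets: "sets (K \<omega>) = sets M"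
    by (auto simp: space_prob_algebra)
  from sets show "space (K \<omega>) = space M" by (rule sets_eq_imp_space_eq)
qed

lemma measure_Int_kernel:
  assumes B: "B \<in> sets G" and A: "A \<in> sets M"
  shows "measure M (B \<inter> A) = (\<integral>\<omega>\<in>B. measure (K \<omega>) A \<partial>M)"
proof -
  have BM[measurable]: "B \<in> sets M"
    using B subalg by (auto simp: subalgebra_def)
  have "(\<lambda>\<omega>. measure (K \<omega>) A) \<in> borel_measurable G"
    using measurable_measure_subprob_algebra[OF A] kernel_measurable by (rule measurable_compose[rotated])
  then have [measurable]: "(\<lambda>\<omega>. measure (K \<omega>) A) \<in> borel_measurable M"
    by (rule measurable_from_subalg[OF subalg])
  have "measure M (B \<inter> A) = (\<integral>\<omega>\<in>B. indicator A \<omega> \<partial>M)"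
    using A BM by (simp add: set_lebesgue_integral_def indicator_inter_arith[symmetric] Int_commute)
  also have "\<dots> = (\<integral>\<omega>\<in>B. real_cond_exp M G (indicator A) \<omega> \<partial>M)"
    using A B by (intro real_cond_exp_intA integrable_real_indicator) (auto simp: less_top[symmetric])
  also have "\<dots> = (\<integral>\<omega>\<in>B. measure (K \<omega>) A \<partial>M)"
    unfolding set_lebesgue_integral_def
    by (intro integral_cong_AE eventually_mono[OF kernel_cond_prob[OF A]])
       measurable
  finally show ?thesis .
qed

lemma measurable_diagonal[measurable]: "(\<lambda>\<omega>. (\<omega>, \<omega>)) \<in> measurable M (G \<Otimes>\<^sub>M M)"
  by (intro measurable_Pair measurable_from_subalg[OF subalg] measurable_ident_sets) simp_all

lemma measurable_Pair_kernel:
  "\<omega> \<in> space M \<Longrightarrow> Pair \<omega> \<in> measurable (K \<omega>) (G \<Otimes>\<^sub>M M)"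
  unfolding measurable_cong_sets[OF sets_K refl] by (rule measurable_Pair1') (simp add: space_G)

lemma kernel_pair_measurable:
  "(\<lambda>\<omega>. distr (K \<omega>) (G \<Otimes>\<^sub>M M) (Pair \<omega>)) \<in> measurable (restr_to_subalg M G) (subprob_algebra (G \<Otimes>\<^sub>M M))"
  unfolding measurable_cong_sets[OF sets_restr_to_subalg[OF subalg] refl]
  by (rule measurable_distr2[OF _ kernel_measurable]) simp

lemma emeasure_Int_eq_nn_integral_kernel_pair:
  assumes B: "B \<in> sets G" and A[measurable]: "A \<in> sets M"
  shows "emeasure M (B \<inter> A)
    = (\<integral>\<^sup>+\<omega>. emeasure (distr (K \<omega>) (G \<Otimes>\<^sub>M M) (Pair \<omega>)) (B \<times> A) \<partial>restr_to_subalg M G)"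
proof -
  have "(\<lambda>\<omega>. measure (K \<omega>) A) \<in> borel_measurable G"
    using measurable_measure_subprob_algebra[OF A] kernel_measurable by (rule measurable_compose[rotated])
  then have m_KA: "(\<lambda>\<omega>. indicator B \<omega> * measure (K \<omega>) A) \<in> borel_measurable G"
    using B by (intro borel_measurable_times borel_measurable_indicator)
  have KA_le_1: "measure (K \<omega>) A \<le> 1" if "\<omega> \<in> space M" for \<omega>
    using prob_space_K[OF that] by (rule prob_space.prob_le_1)
  have "emeasure M (B \<inter> A) = ennreal (\<integral>\<omega>. indicator B \<omega> * measure (K \<omega>) A \<partial>M)"
    using measure_Int_kernel[OF B A] by (simp add: emeasure_eq_measure set_lebesgue_integral_def)
  also have "\<dots> = (\<integral>\<^sup>+\<omega>. ennreal (indicator B \<omega> * measure (K \<omega>) A) \<partial>M)"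
    using measurable_from_subalg[OF subalg m_KA] KA_le_1
    by (intro nn_integral_eq_integral[symmetric] integrable_const_bound[where B=1])
       (auto simp: indicator_def)
  also have "\<dots> = (\<integral>\<^sup>+\<omega>. ennreal (indicator B \<omega> * measure (K \<omega>) A) \<partial>restr_to_subalg M G)"
    by (rule nn_integral_subalgebra2[OF subalg, symmetric]) (rule measurable_compose[OF m_KA measurable_ennreal])
  also have "\<dots> = (\<integral>\<^sup>+\<omega>. emeasure (distr (K \<omega>) (G \<Otimes>\<^sub>M M) (Pair \<omega>)) (B \<times> A) \<partial>restr_to_subalg M G)"
  proof (rule nn_integral_cong)
    fix \<omega> assume "\<omega> \<in> space (restr_to_subalg M G)"
    then have \<omega>: "\<omega> \<in> space M"
      by (simp add: space_restr_to_subalg)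
    interpret K\<omega>: prob_space "K \<omega>"
      by (rule prob_space_K[OF \<omega>])
    have "Pair \<omega> -` (B \<times> A) \<inter> space (K \<omega>) = (if \<omega> \<in> B then A else {})"
      using sets.sets_into_space[OF A] space_K[OF \<omega>] by auto
    then show "ennreal (indicator B \<omega> * measure (K \<omega>) A) = emeasure (distr (K \<omega>) (G \<Otimes>\<^sub>M M) (Pair \<omega>)) (B \<times> A)"
      using A B sets_K[OF \<omega>]
      by (simp add: emeasure_distr[OF measurable_Pair_kernel[OF \<omega>]] K\<omega>.emeasure_eq_measure)
  qed
  finally show ?thesis .
qed

lemma distr_diagonal_eq_bind_kernel:
  "distr M (G \<Otimes>\<^sub>M M) (\<lambda>\<omega>. (\<omega>, \<omega>)) = restr_to_subalg M G \<bind> (\<lambda>\<omega>. distr (K \<omega>) (G \<Otimes>\<^sub>M M) (Pair \<omega>))"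
proof (rule measure_eqI_generator_eq[OF Int_stable_pair_measure_generator pair_measure_closed,
      where A="\<lambda>_. space G \<times> space M"])
  let ?D = "distr M (G \<Otimes>\<^sub>M M) (\<lambda>\<omega>. (\<omega>, \<omega>))" and ?R = "restr_to_subalg M G"
    and ?L = "\<lambda>\<omega>. distr (K \<omega>) (G \<Otimes>\<^sub>M M) (Pair \<omega>)"
  have R_nonempty: "space ?R \<noteq> {}"
    by (simp add: space_restr_to_subalg not_empty)
  have "sets (?R \<bind> ?L) = sets (G \<Otimes>\<^sub>M M)"
    by (rule sets_bind[OF _ R_nonempty]) (rule sets_kernel[OF kernel_pair_measurable])
  then show "sets (?R \<bind> ?L) = sigma_sets (space G \<times> space M) {a \<times> b |a b. a \<in> sets G \<and> b \<in> sets M}"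
    by (simp add: sets_pair_measure)
  show "sets ?D = sigma_sets (space G \<times> space M) {a \<times> b |a b. a \<in> sets G \<and> b \<in> sets M}"
    by (simp add: sets_pair_measure)
  show "emeasure ?D (space G \<times> space M) \<noteq> \<infinity>"
    by (simp add: emeasure_distr)
  fix X assume "X \<in> {a \<times> b |a b. a \<in> sets G \<and> b \<in> sets M}"
  then obtain B A where X: "X = B \<times> A" and B: "B \<in> sets G" and A: "A \<in> sets M"
    by auto
  have XS: "X \<in> sets (G \<Otimes>\<^sub>M M)"
    using X A B by auto
  have "(\<lambda>\<omega>. (\<omega>, \<omega>)) -` X \<inter> space M = B \<inter> A"
    using B subalg sets.sets_into_space[of B G] by (auto simp: X space_G)
  then have "emeasure ?D X = emeasure M (B \<inter> A)"
    by (simp add: emeasure_distr[OF measurable_diagonal XS])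
  also have "\<dots> = (\<integral>\<^sup>+\<omega>. emeasure (?L \<omega>) X \<partial>?R)"
    unfolding X by (rule emeasure_Int_eq_nn_integral_kernel_pair[OF B A])
  also have "\<dots> = emeasure (?R \<bind> ?L) X"
    using R_nonempty by (rule emeasure_bind[symmetric, OF _ kernel_pair_measurable XS])
  finally show "emeasure ?D X = emeasure (?R \<bind> ?L) X" .
qed auto

lemma integral_diagonal_kernel:
  fixes h :: "'a \<times> 'a \<Rightarrow> real"
  assumes h[measurable]: "h \<in> borel_measurable (G \<Otimes>\<^sub>M M)"
    and bounded: "\<And>z. z \<in> space (G \<Otimes>\<^sub>M M) \<Longrightarrow> \<bar>h z\<bar> \<le> B"
  shows "(\<integral>\<omega>. h (\<omega>, \<omega>) \<partial>M) = (\<integral>\<omega>. (\<integral>\<omega>'. h (\<omega>, \<omega>') \<partial>K \<omega>) \<partial>M)"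
proof -
  let ?R = "restr_to_subalg M G" and ?L = "\<lambda>\<omega>. distr (K \<omega>) (G \<Otimes>\<^sub>M M) (Pair \<omega>)"
  have subprob_L: "AE \<omega> in ?R. emeasure (?L \<omega>) (space (?L \<omega>)) \<le> ennreal 1"
    using measurable_space[OF kernel_pair_measurable]
    by (intro AE_I2) (simp add: space_subprob_algebra subprob_space.subprob_emeasure_le_1)
  have "(\<integral>\<omega>. h (\<omega>, \<omega>) \<partial>M) = integral\<^sup>L (?R \<bind> ?L) h"
    by (simp add: integral_distr distr_diagonal_eq_bind_kernel[symmetric])
  also have "\<dots> = (\<integral>\<omega>. integral\<^sup>L (?L \<omega>) h \<partial>?R)"
    by (rule integral_bind[OF h bounded kernel_pair_measurable
          finite_measure_restr_to_subalg[OF subalg finite_measure_axioms] subprob_L])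
  also have "\<dots> = (\<integral>\<omega>. (\<integral>\<omega>'. h (\<omega>, \<omega>') \<partial>K \<omega>) \<partial>?R)"
    by (intro Bochner_Integration.integral_cong refl)
       (simp add: space_restr_to_subalg integral_distr[OF measurable_Pair_kernel h])
  also have "\<dots> = (\<integral>\<omega>. (\<integral>\<omega>'. h (\<omega>, \<omega>') \<partial>K \<omega>) \<partial>M)"
    by (intro integral_subalgebra2[OF subalg] integral_measurable_subprob_algebra2[OF _ kernel_measurable])
       (simp add: case_prod_eta)
  finally show ?thesis .
qed

lemma real_cond_exp_diagonal_kernel:
  fixes f :: "'a \<times> 'a \<Rightarrow> real"
  assumes f[measurable]: "f \<in> borel_measurable (G \<Otimes>\<^sub>M M)"
    and bounded: "\<And>z. z \<in> space (G \<Otimes>\<^sub>M M) \<Longrightarrow> \<bar>f z\<bar> \<le> B"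
  shows "AE \<omega> in M. real_cond_exp M G (\<lambda>\<omega>. f (\<omega>, \<omega>)) \<omega> = (\<integral>\<omega>'. f (\<omega>, \<omega>') \<partial>K \<omega>)"
proof (rule real_cond_exp_charact)
  have g_G: "(\<lambda>\<omega>. \<integral>\<omega>'. f (\<omega>, \<omega>') \<partial>K \<omega>) \<in> borel_measurable G"
    by (rule integral_measurable_subprob_algebra2[OF _ kernel_measurable]) (simp add: case_prod_eta)
  then show "(\<lambda>\<omega>. \<integral>\<omega>'. f (\<omega>, \<omega>') \<partial>K \<omega>) \<in> borel_measurable G" .
  have g_bounded: "\<bar>\<integral>\<omega>'. f (\<omega>, \<omega>') \<partial>K \<omega>\<bar> \<le> B" if \<omega>: "\<omega> \<in> space M" for \<omega>
  proof -
    have "-B \<le> f (\<omega>, \<omega>') \<and> f (\<omega>, \<omega>') \<le> B" if "\<omega>' \<in> space (K \<omega>)" for \<omega>'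
    proof -
      have "(\<omega>, \<omega>') \<in> space (G \<Otimes>\<^sub>M M)"
        using that \<omega> by (simp add: space_pair_measure space_G space_K)
      then show ?thesis
        using bounded by fastforce
    qed
    then have "-B \<le> (\<integral>\<omega>'. f (\<omega>, \<omega>') \<partial>K \<omega>) \<and> (\<integral>\<omega>'. f (\<omega>, \<omega>') \<partial>K \<omega>) \<le> B"
      by (rule prob_space.integral_between_bounds[OF prob_space_K[OF \<omega>]
          measurable_compose[OF measurable_Pair_kernel[OF \<omega>] f]])
    then show ?thesis
      by linarith
  qed
  show "integrable M (\<lambda>\<omega>. \<integral>\<omega>'. f (\<omega>, \<omega>') \<partial>K \<omega>)"
    using measurable_from_subalg[OF subalg g_G] g_bounded
    by (intro integrable_const_bound[where B=B]) (auto intro!: AE_I2)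
  show "integrable M (\<lambda>\<omega>. f (\<omega>, \<omega>))"
    using bounded by (intro integrable_const_bound[where B=B] AE_I2) (auto simp: space_pair_measure space_G)
  fix A assume A[measurable]: "A \<in> sets G"
  have "(\<integral>\<omega>\<in>A. f (\<omega>, \<omega>) \<partial>M) = (\<integral>\<omega>. indicator A (fst (\<omega>, \<omega>)) * f (\<omega>, \<omega>) \<partial>M)"
    by (simp add: set_lebesgue_integral_def)
  also have "\<dots> = (\<integral>\<omega>. (\<integral>\<omega>'. indicator A (fst (\<omega>, \<omega>')) * f (\<omega>, \<omega>') \<partial>K \<omega>) \<partial>M)"
    using bounded by (intro integral_diagonal_kernel[where B=B]) (force simp: indicator_def)+
  also have "\<dots> = (\<integral>\<omega>\<in>A. (\<integral>\<omega>'. f (\<omega>, \<omega>') \<partial>K \<omega>) \<partial>M)"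
    by (simp add: set_lebesgue_integral_def)
  finally show "(\<integral>\<omega>\<in>A. f (\<omega>, \<omega>) \<partial>M) = (\<integral>\<omega>\<in>A. (\<integral>\<omega>'. f (\<omega>, \<omega>') \<partial>K \<omega>) \<partial>M)" .
qed

lemma real_cond_exp_kernel_compose:
  fixes h :: "real \<Rightarrow> 'a \<Rightarrow> real"
  assumes h[measurable]: "(\<lambda>(x, \<omega>). h x \<omega>) \<in> borel_measurable (borel \<Otimes>\<^sub>M M)"
    and bounded: "\<And>x \<omega>. \<omega> \<in> space M \<Longrightarrow> \<bar>h x \<omega>\<bar> \<le> B"
    and X[measurable]: "X \<in> borel_measurable G"
  shows "AE \<omega> in M. real_cond_exp M G (\<lambda>\<omega>'. h (X \<omega>') \<omega>') \<omega> = (\<integral>\<omega>'. h (X \<omega>) \<omega>' \<partial>K \<omega>)"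
proof -
  have "(\<lambda>(\<omega>, \<omega>'). h (X \<omega>) \<omega>') \<in> borel_measurable (G \<Otimes>\<^sub>M M)"
    by measurable
  moreover have "\<bar>(\<lambda>(\<omega>, \<omega>'). h (X \<omega>) \<omega>') z\<bar> \<le> B" if "z \<in> space (G \<Otimes>\<^sub>M M)" for z
    using that bounded by (auto simp: space_pair_measure)
  ultimately show ?thesis
    using real_cond_exp_diagonal_kernel[of "\<lambda>(\<omega>, \<omega>'). h (X \<omega>) \<omega>'" B] by simp
qed

lemma kernel_integral_measurable:
  fixes h :: "real \<Rightarrow> 'a \<Rightarrow> real"
  assumes "(\<lambda>(x, \<omega>). h x \<omega>) \<in> borel_measurable (borel \<Otimes>\<^sub>M M)"
  shows "(\<lambda>(x, \<omega>). \<integral>\<omega>'. h x \<omega>' \<partial>K \<omega>) \<in> borel_measurable (borel \<Otimes>\<^sub>M G)"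
proof -
  have "(\<lambda>(w, \<omega>'). h (fst w) \<omega>') \<in> borel_measurable ((borel \<Otimes>\<^sub>M G) \<Otimes>\<^sub>M M)"
    using assms by measurable
  from integral_measurable_subprob_algebra2[OF this measurable_compose[OF measurable_snd kernel_measurable]]
  show ?thesis
    by (simp add: case_prod_beta')
qed

lemma
  fixes h :: "real \<Rightarrow> 'a \<Rightarrow> real"
  assumes \<omega>: "\<omega> \<in> space M"
    and h: "\<And>x. h x \<in> borel_measurable M"
    and bounded: "\<And>x \<omega>'. \<omega>' \<in> space M \<Longrightarrow> a \<le> h x \<omega>' \<and> h x \<omega>' \<le> b"
  shows kernel_integral_bounds: "a \<le> (\<integral>\<omega>'. h x \<omega>' \<partial>K \<omega>) \<and> (\<integral>\<omega>'. h x \<omega>' \<partial>K \<omega>) \<le> b"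
    and mono_kernel_integral: "(\<And>\<omega>'. \<omega>' \<in> space M \<Longrightarrow> mono (\<lambda>x. h x \<omega>')) \<Longrightarrow> mono (\<lambda>x. \<integral>\<omega>'. h x \<omega>' \<partial>K \<omega>)"
proof -
  interpret K\<omega>: prob_space "K \<omega>"
    by (rule prob_space_K[OF \<omega>])
  have h_K: "h x \<in> borel_measurable (K \<omega>)" for x
    using h by (simp add: measurable_cong_sets[OF sets_K[OF \<omega>] refl])
  show "a \<le> (\<integral>\<omega>'. h x \<omega>' \<partial>K \<omega>) \<and> (\<integral>\<omega>'. h x \<omega>' \<partial>K \<omega>) \<le> b"
    using bounded by (intro K\<omega>.integral_between_bounds h_K) (simp add: space_K[OF \<omega>])
  assume mono: "\<And>\<omega>'. \<omega>' \<in> space M \<Longrightarrow> mono (\<lambda>x. h x \<omega>')"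
  have integrable: "integrable (K \<omega>) (h x)" for x
    using bounded by (intro K\<omega>.integrable_between_bounds h_K) (simp add: space_K[OF \<omega>])
  show "mono (\<lambda>x. \<integral>\<omega>'. h x \<omega>' \<partial>K \<omega>)"
    using mono by (intro monoI integral_mono[OF integrable integrable]) (auto simp: space_K[OF \<omega>] mono_def)
qed

end

locale kernel_feedback = regular_cond_kernel M G K
  for M :: "'a measure" and G :: "'a measure" and K :: "'a \<Rightarrow> 'a measure" +
  fixes h c :: "real \<Rightarrow> 'a \<Rightarrow> real" and \<pi> :: real
  assumes h_measurable[measurable]: "(\<lambda>(x, \<omega>). h x \<omega>) \<in> borel_measurable (borel \<Otimes>\<^sub>M M)"
    and h_range: "\<And>x \<omega>. \<omega> \<in> space M \<Longrightarrow> 0 \<le> h x \<omega> \<and> h x \<omega> \<le> \<pi>"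
    and h_mono: "\<And>\<omega>. \<omega> \<in> space M \<Longrightarrow> mono (\<lambda>x. h x \<omega>)"
    and continuous_kernel_integral: "\<And>\<omega>. \<omega> \<in> space M \<Longrightarrow> continuous_on UNIV (\<lambda>x. \<integral>\<omega>'. h x \<omega>' \<partial>K \<omega>)"
    and c_measurable: "(\<lambda>(a, \<omega>). c a \<omega>) \<in> borel_measurable (borel \<Otimes>\<^sub>M G)"
    and c_mono_continuous: "\<And>\<omega>. \<omega> \<in> space M \<Longrightarrow> mono (\<lambda>a. c a \<omega>) \<and> continuous_on UNIV (\<lambda>a. c a \<omega>)"
begin

definition kernel_mean :: "real \<Rightarrow> 'a \<Rightarrow> real" where
  "kernel_mean x \<omega> = (\<integral>\<omega>'. h x \<omega>' \<partial>K \<omega>)"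

definition solution :: "real \<Rightarrow> 'a \<Rightarrow> real" where
  "solution g \<omega> = fixed_point_root (\<lambda>x. kernel_mean x \<omega>) (\<lambda>a. c a \<omega>) g"

lemma h_measurable_slice: "h x \<in> borel_measurable M"
  using measurable_Pair2[OF h_measurable, of x] by simp

lemma monotone_feedback_kernel_mean:
  assumes \<omega>: "\<omega> \<in> space M"
  shows "monotone_feedback (\<lambda>x. kernel_mean x \<omega>) (\<lambda>a. c a \<omega>) \<pi>"
proof
  show "mono (\<lambda>x. kernel_mean x \<omega>)"
    unfolding kernel_mean_def
    by (intro mono_kernel_integral[where h=h, OF \<omega> h_measurable_slice h_range h_mono])
  show "0 \<le> kernel_mean x \<omega> \<and> kernel_mean x \<omega> \<le> \<pi>" for x
    unfolding kernel_mean_def by (rule kernel_integral_bounds[where h=h, OF \<omega> h_measurable_slice h_range])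
qed (use \<omega> continuous_kernel_integral c_mono_continuous in \<open>simp_all add: kernel_mean_def\<close>)

lemma measurable_solution: "(\<lambda>(g, \<omega>). solution g \<omega>) \<in> borel_measurable (borel \<Otimes>\<^sub>M G)"
  unfolding solution_def kernel_mean_def
  by (rule measurable_fixed_point_root[OF kernel_integral_measurable[OF h_measurable] c_measurable])
     (use monotone_feedback_kernel_mean space_G in \<open>simp add: kernel_mean_def\<close>)

lemma solution_fixed_point: "\<omega> \<in> space M \<Longrightarrow> kernel_mean (g - c (solution g \<omega>) \<omega>) \<omega> = solution g \<omega>"
  unfolding solution_def by (rule monotone_feedback.root_fixed_point[OF monotone_feedback_kernel_mean])

lemma real_cond_exp_feedback:
  assumes "(\<lambda>(g, \<omega>). \<beta> g \<omega>) \<in> borel_measurable (borel \<Otimes>\<^sub>M G)"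
  shows "AE \<omega> in M. real_cond_exp M G (\<lambda>\<omega>'. h (g - c (\<beta> g \<omega>') \<omega>') \<omega>') \<omega> = kernel_mean (g - c (\<beta> g \<omega>) \<omega>) \<omega>"
proof -
  have [measurable]: "\<beta> g \<in> borel_measurable G"
    using measurable_Pair2[OF assms, of g] by simp
  have "(\<lambda>\<omega>. g - c (\<beta> g \<omega>) \<omega>) \<in> borel_measurable G"
    using c_measurable by measurable
  from real_cond_exp_kernel_compose[OF h_measurable _ this, of \<pi>] h_range
  show ?thesis
    by (simp add: kernel_mean_def)
qed

lemma solution_solves:
  "AE \<omega> in M. solution g \<omega> = real_cond_exp M G (\<lambda>\<omega>'. h (g - c (solution g \<omega>') \<omega>') \<omega>') \<omega>"
  using real_cond_exp_feedback[OF measurable_solution, of g] AE_space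
  by eventually_elim (simp add: solution_fixed_point)

lemma solution_unique:
  assumes "(\<lambda>(g, \<omega>). \<beta> g \<omega>) \<in> borel_measurable (borel \<Otimes>\<^sub>M G)"
    and "AE \<omega> in M. \<beta> g \<omega> = real_cond_exp M G (\<lambda>\<omega>'. h (g - c (\<beta> g \<omega>') \<omega>') \<omega>') \<omega>"
  shows "AE \<omega> in M. \<beta> g \<omega> = solution g \<omega>"
  using assms(2) real_cond_exp_feedback[OF assms(1), of g] AE_space
proof eventually_elim
  case (elim \<omega>)
  from trans[OF elim(1,2)] show ?case
    unfolding solution_def by (rule monotone_feedback.root_unique[OF monotone_feedback_kernel_mean[OF elim(3)]])
qed

lemma
  assumes "\<omega> \<in> space M"
  shows solution_range: "0 \<le> solution g \<omega> \<and> solution g \<omega> \<le> \<pi>"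
    and mono_solution: "mono (\<lambda>g. solution g \<omega>)"
    and continuous_solution: "continuous_on UNIV (\<lambda>g. solution g \<omega>)"
  using monotone_feedback.root_range monotone_feedback.mono_root monotone_feedback.continuous_root
    monotone_feedback_kernel_mean[OF assms]
  unfolding solution_def by blast+

end

theorem lemma2:
  fixes M :: "'a measure" and F :: "nat \<Rightarrow> 'a measure" and T t :: nat and \<pi> :: real
    and c :: "real \<Rightarrow> 'a \<Rightarrow> real" and \<alpha>1 :: "real \<Rightarrow> 'a \<Rightarrow> real"
    and K :: "'a \<Rightarrow> 'a measure" and \<epsilon> :: "'a \<Rightarrow> real"
  assumes "prob_space M"
    and "filtration_upto M F T"
    and "\<pi> > 0" and "t < T"
    and "(\<lambda>(a, \<omega>). c a \<omega>) \<in> borel_measurable (borel \<Otimes>\<^sub>M F t)"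
    and "\<forall>\<omega>\<in>space M. mono (\<lambda>a. c a \<omega>) \<and> continuous_on UNIV (\<lambda>a. c a \<omega>)"
    and "(\<lambda>(x, \<omega>). \<alpha>1 x \<omega>) \<in> borel_measurable (borel \<Otimes>\<^sub>M M)"
    and "\<forall>x. \<forall>\<omega>\<in>space M. 0 \<le> \<alpha>1 x \<omega> \<and> \<alpha>1 x \<omega> \<le> \<pi>"
    and "\<forall>\<omega>\<in>space M. mono (\<lambda>x. \<alpha>1 x \<omega>)"
    and "regular_cond_distr M (F t) K"
    and "\<epsilon> \<in> borel_measurable M"
    and "\<forall>\<omega>\<in>space M. continuous_on UNIV (\<lambda>x. \<integral>\<omega>'. \<alpha>1 (x + \<epsilon> \<omega>') \<omega>' \<partial>(K \<omega>))"
  shows "\<exists>\<alpha> :: real \<Rightarrow> 'a \<Rightarrow> real.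
     ((\<lambda>(g, \<omega>). \<alpha> g \<omega>) \<in> borel_measurable (borel \<Otimes>\<^sub>M F t)
      \<and> (\<forall>g. \<forall>\<omega>\<in>space M. 0 \<le> \<alpha> g \<omega> \<and> \<alpha> g \<omega> \<le> \<pi>)
      \<and> (\<forall>g. AE \<omega> in M. \<alpha> g \<omega> =
            real_cond_exp M (F t) (\<lambda>\<omega>'. \<alpha>1 (g - c (\<alpha> g \<omega>') \<omega>' + \<epsilon> \<omega>') \<omega>') \<omega>))
   \<and> (\<forall>\<alpha>' :: real \<Rightarrow> 'a \<Rightarrow> real.
        ((\<lambda>(g, \<omega>). \<alpha>' g \<omega>) \<in> borel_measurable (borel \<Otimes>\<^sub>M F t)
         \<and> (\<forall>g. \<forall>\<omega>\<in>space M. 0 \<le> \<alpha>' g \<omega> \<and> \<alpha>' g \<omega> \<le> \<pi>)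
         \<and> (\<forall>g. AE \<omega> in M. \<alpha>' g \<omega> =
               real_cond_exp M (F t) (\<lambda>\<omega>'. \<alpha>1 (g - c (\<alpha>' g \<omega>') \<omega>' + \<epsilon> \<omega>') \<omega>') \<omega>))
        \<longrightarrow> (\<forall>g. AE \<omega> in M. \<alpha>' g \<omega> = \<alpha> g \<omega>))
   \<and> (\<forall>\<omega>\<in>space M. mono (\<lambda>g. \<alpha> g \<omega>) \<and> continuous_on UNIV (\<lambda>g. \<alpha> g \<omega>))"
proof -
  interpret prob_space M
    by (rule assms(1))
  interpret kernel_feedback M "F t" K "\<lambda>x \<omega>'. \<alpha>1 (x + \<epsilon> \<omega>') \<omega>'" c \<pi>
  proof unfold_locales
    show "subalgebra M (F t)"
      using assms(2,4) by (simp add: filtration_upto_def)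
    show "(\<lambda>(x, \<omega>). \<alpha>1 (x + \<epsilon> \<omega>) \<omega>) \<in> borel_measurable (borel \<Otimes>\<^sub>M M)"
      using assms(7,11) by measurable
  qed (use assms(5,6,8-10,12) in \<open>auto simp: mono_def\<close>)
  show ?thesis
    using measurable_solution solution_range solution_solves solution_unique mono_solution continuous_solution
    by (intro exI[of _ solution]) blast
qed

end
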